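(* Let $n=p+q\geq 3$, let $\mathfrak g=\mathfrak{so}(p+1,q+1)$ with the $|1|$-grading described below, and let $Z\in\mathfrak g_1$ satisfy $\langle Z,Z\rangle\neq 0$. Then: (1) $0=C(Z)\subset F(Z)=\{X\in\mathfrak g_{-1}: ZX=\langle X,X\rangle=0\}$ and $T(Z)=\left\{\frac{2}{\langle Z,Z\rangle}\mathbb I Z^t\right\}$. (2) For the unique element $X\in T(Z)$, the bracket $A=[Z,X]\in\mathfrak g_0$ is twice the grading element of $\mathfrak g$. In particular, $A$ acts diagonalizably on $\mathfrak g_{-1}$ and on each $\mathbb W$ in the list below, all eigenvalues of $A$ on $\mathfrak g_{-1}$ are non-positive with $0$-eigenspace equal to $C(Z)$, $\mathbb W_{ss}(A)=0$, and $\bigcap_{X\in T(Z)}\mathbb W_{st}(A)=0$ for each such $\mathbb W$.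
   Context: Let $\mathbb I=\mathrm{Id}_p\oplus(-\mathrm{Id}_q)$. Realize $\mathfrak g=\mathfrak{so}(p+1,q+1)$ as the matrices $\begin{pmatrix} a & Z & 0\\ X & A & -\mathbb I Z^t\\ 0 & -X^t\mathbb I & -a\end{pmatrix}$ with $a\in\mathbb R$, $X\in\mathbb R^n$ (column), $Z\in\mathbb R^{n*}$ (row), $A\in\mathfrak{so}(p,q)$; bracket is the matrix commutator. The components $\mathfrak g_{-1},\mathfrak g_0,\mathfrak g_1$ are given by $X$, $(A,a)$ and $Z$ respectively. $ZX$ is the real number given by the matrix product; $\langle X,Y\rangle=X^t\mathbb IY$ on $\mathfrak g_{-1}$ and $\langle Z,W\rangle=Z\mathbb IW^t$ on $\mathfrak g_1$. The grading element is the unique $E\in\mathfrak g$ with $\mathrm{ad}(E)=i$ on $\mathfrak g_i$, $i=-1,0,1$. For $Z\in\mathfrak g_1$: $C(Z)=\{X\in\mathfrak g_{-1}:[X,Z]=0\}$, $F(Z)=\{X\in\mathfrak g_{-1}:[X,[X,Z]]=0\}$, $T(Z)=\{X\in\mathfrak g_{-1}:[[Z,X],X]=-2X,\ [[Z,X],Z]=2Z\}$. The representations $\mathbb W$ of $\mathfrak g_0\cong\mathfrak{co}(p,q)$ carrying harmonic curvature: for $n\geq5$, the irreducible component of highest weight in $\Lambda^2\mathfrak g_1\otimes\mathfrak{so}(\mathfrak g_{-1})$ (Weyl tensors); for $n=3$, the irreducible component of highest weight in $\Lambda^2\mathfrak g_1\otimes\mathfrak g_1$ (Cotton–York tensors);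 for $n=4$, the two components of the Weyl-tensor space corresponding to the self-dual and anti-self-dual parts of $\Lambda^2\mathfrak g_1$. For $A$ acting diagonalizably on $\mathbb W$, $\mathbb W_{ss}(A)$ (resp. $\mathbb W_{st}(A)$) is the sum of the eigenspaces with negative (resp. non-positive) eigenvalues. *)

theory Defs
  imports "HOL-Analysis.Analysis"
begin

text \<open>The signature
  is fixed by a set P of indices: the diagonal of the matrix II is +1 on P and -1
  off P (so p = card P, q = n - card P).  Matrices of size (n+2) are indexed by
  'n + bool, where Inr True is the first row/column and Inr False the last.\<close>

definition eps :: "('n::finite) set \<Rightarrow> 'n \<Rightarrow> real" where
  "eps P i = (if i \<in> P then 1 else -1)"

definition Ibb :: "('n::finite) set \<Rightarrow> real^'n^'n" where
  "Ibb P = (\<chi> i j. if i = j then eps P i else 0)"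

definition so_pq :: "('n::finite) set \<Rightarrow> real^'n^'n \<Rightarrow> bool" where
  "so_pq P A \<longleftrightarrow> transpose A ** Ibb P + Ibb P ** A = 0"

text \<open>The block matrix  [[a, Z, 0], [X, A, -II Z^t], [0, -X^t II, -a]].
  Both the column X and the row Z are represented by vectors in real^'n.\<close>
definition genmat :: "('n::finite) set \<Rightarrow> real \<Rightarrow> real^'n \<Rightarrow> real^'n^'n \<Rightarrow> real^'n
      \<Rightarrow> real^('n + bool)^('n + bool)" where
  "genmat P a X A Z = (\<chi> r c. case (r, c) of
      (Inr True, Inr True) \<Rightarrow> a
    | (Inr True, Inl j) \<Rightarrow> Z $ j
    | (Inl i, Inr True) \<Rightarrow> X $ i
    | (Inl i, Inl j) \<Rightarrow> A $ i $ j
    | (Inl i, Inr False) \<Rightarrow> - ((Ibb P *v Z) $ i)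
    | (Inr False, Inl j) \<Rightarrow> - ((X v* Ibb P) $ j)
    | (Inr False, Inr False) \<Rightarrow> - a
    | _ \<Rightarrow> 0)"

definition gpq :: "('n::finite) set \<Rightarrow> (real^('n + bool)^('n + bool)) set" where
  "gpq P = {genmat P a X A Z | a X A Z. so_pq P A}"

definition br :: "real^('m::finite)^'m \<Rightarrow> real^'m^'m \<Rightarrow> real^'m^'m" where
  "br M N = M ** N - N ** M"

definition gm1 :: "('n::finite) set \<Rightarrow> real^'n \<Rightarrow> real^('n + bool)^('n + bool)" where
  "gm1 P X = genmat P 0 X 0 0"

definition gp1 :: "('n::finite) set \<Rightarrow> real^'n \<Rightarrow> real^('n + bool)^('n + bool)" where
  "gp1 P Z = genmat P 0 0 0 Z"

definition g_minus :: "('n::finite) set \<Rightarrow> (real^('n + bool)^('n + bool)) set" where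
  "g_minus P = range (gm1 P)"

definition g_plus :: "('n::finite) set \<Rightarrow> (real^('n + bool)^('n + bool)) set" where
  "g_plus P = range (gp1 P)"

definition g_zero :: "('n::finite) set \<Rightarrow> (real^('n + bool)^('n + bool)) set" where
  "g_zero P = {genmat P a 0 A 0 | a A. so_pq P A}"

text \<open>ZX is the matrix product (row times column); the forms on g_{-1} and g_1
  are X^t II Y and Z II W^t, both given by the same coordinate formula.\<close>
definition form_pq :: "('n::finite) set \<Rightarrow> real^'n \<Rightarrow> real^'n \<Rightarrow> real" where
  "form_pq P X Y = X \<bullet> (Ibb P *v Y)"

definition grading_element :: "('n::finite) set \<Rightarrow> real^('n + bool)^('n + bool)" where
  "grading_element P = (THE E. E \<in> gpq P
      \<and> (\<forall>x\<in>g_minus P. br E x = - x)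
      \<and> (\<forall>x\<in>g_zero P. br E x = 0)
      \<and> (\<forall>x\<in>g_plus P. br E x = x))"

definition CZ :: "('n::finite) set \<Rightarrow> real^('n + bool)^('n + bool) \<Rightarrow> (real^('n + bool)^('n + bool)) set" where
  "CZ P Zm = {x \<in> g_minus P. br x Zm = 0}"

definition FZ :: "('n::finite) set \<Rightarrow> real^('n + bool)^('n + bool) \<Rightarrow> (real^('n + bool)^('n + bool)) set" where
  "FZ P Zm = {x \<in> g_minus P. br x (br x Zm) = 0}"

definition TZ :: "('n::finite) set \<Rightarrow> real^('n + bool)^('n + bool) \<Rightarrow> (real^('n + bool)^('n + bool)) set" where
  "TZ P Zm = {x \<in> g_minus P. br (br Zm x) x = (-2) *\<^sub>R x \<and> br (br Zm x) Zm = 2 *\<^sub>R Zm}"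

definition eigsp :: "'v::real_vector set \<Rightarrow> ('v \<Rightarrow> 'v) \<Rightarrow> real \<Rightarrow> 'v set" where
  "eigsp W f c = {w \<in> W. f w = c *\<^sub>R w}"

definition diag_on :: "'v::real_vector set \<Rightarrow> ('v \<Rightarrow> 'v) \<Rightarrow> bool" where
  "diag_on W f \<longleftrightarrow> subspace W \<and> linear f \<and> (\<forall>w\<in>W. f w \<in> W)
       \<and> W \<subseteq> span (\<Union>c. eigsp W f c)"

definition W_ss :: "'v::real_vector set \<Rightarrow> ('v \<Rightarrow> 'v) \<Rightarrow> 'v set" where
  "W_ss W f = span (\<Union>c\<in>{c. c < 0}. eigsp W f c)"

definition W_st :: "'v::real_vector set \<Rightarrow> ('v \<Rightarrow> 'v) \<Rightarrow> 'v set" where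
  "W_st W f = span (\<Union>c\<in>{c. c \<le> 0}. eigsp W f c)"

definition m1coord :: "real^('n::finite + bool)^('n + bool) \<Rightarrow> real^'n" where
  "m1coord M = (\<chi> i. M $ Inl i $ Inr True)"

definition rho :: "('n::finite) set \<Rightarrow> real^('n + bool)^('n + bool) \<Rightarrow> real^'n \<Rightarrow> real^'n" where
  "rho P D X = m1coord (br D (gm1 P X))"

text \<open>Using the g_0-equivariant duality g_1 = (g_{-1})^* (Z \<mapsto> (X \<mapsto> ZX)),
  an element of Lambda^2 g_1 (x) so(g_{-1}) is a tensor R (components R i j k l =
  l-th component of R(e_i,e_j)e_k) antisymmetric in i,j and with R(e_i,e_j)
  skew for the form; an element of Lambda^2 g_1 (x) g_1 is a tensor C i j k
  antisymmetric in i,j.\<close>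

definition weyl_act :: "('n::finite) set \<Rightarrow> real^('n + bool)^('n + bool)
     \<Rightarrow> real^'n^'n^'n^'n \<Rightarrow> real^'n^'n^'n^'n" where
  "weyl_act P D R = (\<chi> i j k l.
       (\<Sum>m\<in>UNIV. rho P D (axis m 1) $ l * R $ i $ j $ k $ m)
     - (\<Sum>m\<in>UNIV. rho P D (axis i 1) $ m * R $ m $ j $ k $ l)
     - (\<Sum>m\<in>UNIV. rho P D (axis j 1) $ m * R $ i $ m $ k $ l)
     - (\<Sum>m\<in>UNIV. rho P D (axis k 1) $ m * R $ i $ j $ m $ l))"

definition cotton_act :: "('n::finite) set \<Rightarrow> real^('n + bool)^('n + bool)
     \<Rightarrow> real^'n^'n^'n \<Rightarrow> real^'n^'n^'n" where
  "cotton_act P D C = (\<chi> i j k.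
     - (\<Sum>m\<in>UNIV. rho P D (axis i 1) $ m * C $ m $ j $ k)
     - (\<Sum>m\<in>UNIV. rho P D (axis j 1) $ m * C $ i $ m $ k)
     - (\<Sum>m\<in>UNIV. rho P D (axis k 1) $ m * C $ i $ j $ m))"

text \<open>Weyl tensors: the highest-weight component of Lambda^2 g_1 (x) so(g_{-1}),
  i.e. tensors of that space satisfying the first Bianchi identity and with
  vanishing Ricci contraction.\<close>
definition weyl_space :: "('n::finite) set \<Rightarrow> (real^'n^'n^'n^'n) set" where
  "weyl_space P = {R. (\<forall>i j k l. R $ i $ j $ k $ l = - R $ j $ i $ k $ l)
     \<and> (\<forall>i j k l. eps P l * R $ i $ j $ k $ l = - (eps P k * R $ i $ j $ l $ k))
     \<and> (\<forall>i j k l. R $ i $ j $ k $ l + R $ j $ k $ i $ l + R $ k $ i $ j $ l = 0)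
     \<and> (\<forall>j k. (\<Sum>i\<in>UNIV. R $ i $ j $ k $ i) = 0)}"

text \<open>Cotton--York tensors: the highest-weight component of Lambda^2 g_1 (x) g_1,
  i.e. antisymmetric in the first pair, with vanishing cyclic sum and vanishing
  trace (contraction of the first and third slot with the form).\<close>
definition cotton_space :: "('n::finite) set \<Rightarrow> (real^'n^'n^'n) set" where
  "cotton_space P = {C. (\<forall>i j k. C $ i $ j $ k = - C $ j $ i $ k)
     \<and> (\<forall>i j k. C $ i $ j $ k + C $ j $ k $ i + C $ k $ i $ j = 0)
     \<and> (\<forall>j. (\<Sum>i\<in>UNIV. eps P i * C $ i $ j $ i) = 0)}"

definition g0_invariant :: "('n::finite) set \<Rightarrow> (real^('n + bool)^('n + bool) \<Rightarrow> 'v \<Rightarrow> 'v) \<Rightarrow> 'v set \<Rightarrow> bool" where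
  "g0_invariant P act W \<longleftrightarrow> (\<forall>D\<in>g_zero P. \<forall>w\<in>W. act D w \<in> W)"

definition harm_concl :: "('n::finite) set \<Rightarrow> (real^('n + bool)^('n + bool) \<Rightarrow> 'v::real_vector \<Rightarrow> 'v)
    \<Rightarrow> 'v set \<Rightarrow> real^('n + bool)^('n + bool) \<Rightarrow> real^('n + bool)^('n + bool) \<Rightarrow> bool" where
  "harm_concl P act W Zm A \<longleftrightarrow> diag_on W (act A) \<and> W_ss W (act A) = {0}
     \<and> (\<Inter>X\<in>TZ P Zm. W_st W (act (br Zm X))) = {0}"

end

theory Submission
  imports Defs
begin

(* Identify X in g_{-1} and Z in g_1 with vectors x, z in R^n.  A direct matrix computation gives
     [X,[X,Z]] = -2 (z.x) x + <x,x> II z    in g_{-1},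
     [[X,Z],Z] = <z,z> II x - 2 (z.x) z     in g_1,
   and [X,Z] has g_0-components a = -(z.x) and x z - II z^t x^t II.  Since <z,z> <> 0,
   contracting the latter with II z shows C(Z) = 0; pairing the first bracket with z and with
   II x gives F(Z); and the two equations defining T(Z) force x = 2 II z / <z,z>.  For this x the
   so(p,q)-component vanishes and z.x = 2, so [Z,X] = 2E.  Then [Z,X] acts on g_{-1} by the
   scalar -2, and on the tensor spaces built from copies of g_1 by positive scalars (4 on Weyl
   tensors, 6 on Cotton-York tensors), which yields all spectral statements at once. *)

section \<open>Block coordinates on so(p+1,q+1)\<close>

lemma sum_UNIV_sum_bool:
  "(\<Sum>x\<in>(UNIV::('a::finite + bool) set). f x) = (\<Sum>i\<in>UNIV. f (Inl i)) + f (Inr True) + f (Inr False)"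
proof -
  have U: "(UNIV::('a + bool) set) = Inl ` UNIV \<union> Inr ` {True, False}"
    by (auto simp: UNIV_bool) (metis range_eqI sum.exhaust)
  show ?thesis
    unfolding U by (subst sum.union_disjoint) (auto simp: sum.reindex add.assoc)
qed

lemma eps_mult_eps [simp]:
  "eps P i * eps P i = 1" "eps P i * (eps P i * x) = x" "eps P i * x * (eps P i * y) = x * y"
  by (auto simp: eps_def)

lemma Ibb_mult_vec [simp]: "(Ibb P *v z) $ i = eps P i * z $ i"
  by (simp add: Ibb_def matrix_vector_mult_def if_distrib if_distribR cong: if_cong)

lemma vec_mult_Ibb [simp]: "(z v* Ibb P) $ i = eps P i * z $ i"
  by (simp add: Ibb_def vector_matrix_mult_def if_distrib if_distribR cong: if_cong)

lemma matrix_mult_Ibb_nth [simp]: "(M ** Ibb P) $ i $ j = M $ i $ j * eps P j"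
  by (simp add: Ibb_def matrix_matrix_mult_def if_distrib if_distribR cong: if_cong)

lemma Ibb_mult_matrix_nth [simp]: "(Ibb P ** M) $ i $ j = eps P i * M $ i $ j"
  by (simp add: Ibb_def matrix_matrix_mult_def if_distrib if_distribR cong: if_cong)

lemma Ibb_mult_Ibb [simp]: "Ibb P *v (Ibb P *v z) = z"
  by (simp add: vec_eq_iff)

lemma inner_Ibb_commute: "(Ibb P *v x) \<bullet> y = x \<bullet> (Ibb P *v y)"
  by (simp add: inner_vec_def mult.assoc mult.left_commute)

lemma Ibb_mult_scaleR [simp]: "Ibb P *v (c *\<^sub>R v) = c *\<^sub>R (Ibb P *v v)"
  by (simp add: vec_eq_iff)

lemma form_pq_eq_sum: "form_pq P X Y = (\<Sum>i\<in>UNIV. eps P i * X $ i * Y $ i)"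
  by (simp add: form_pq_def inner_vec_def mult.left_commute mult.commute)

lemma genmat_nth [simp]:
  "genmat P a X A Z $ Inr True $ Inr True = a"
  "genmat P a X A Z $ Inr True $ Inl j = Z $ j"
  "genmat P a X A Z $ Inr True $ Inr False = 0"
  "genmat P a X A Z $ Inl i $ Inr True = X $ i"
  "genmat P a X A Z $ Inl i $ Inl j = A $ i $ j"
  "genmat P a X A Z $ Inl i $ Inr False = - (eps P i * Z $ i)"
  "genmat P a X A Z $ Inr False $ Inr True = 0"
  "genmat P a X A Z $ Inr False $ Inl j = - (eps P j * X $ j)"
  "genmat P a X A Z $ Inr False $ Inr False = - a"
  by (simp_all add: genmat_def)

lemma block_matrix_eqI:
  fixes M N :: "real^('n::finite + bool)^('n + bool)"
  assumes "\<And>i j. M $ Inl i $ Inl j = N $ Inl i $ Inl j"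
    "\<And>i. M $ Inl i $ Inr True = N $ Inl i $ Inr True"
    "\<And>i. M $ Inl i $ Inr False = N $ Inl i $ Inr False"
    "\<And>j. M $ Inr True $ Inl j = N $ Inr True $ Inl j"
    "\<And>j. M $ Inr False $ Inl j = N $ Inr False $ Inl j"
    "M $ Inr True $ Inr True = N $ Inr True $ Inr True"
    "M $ Inr True $ Inr False = N $ Inr True $ Inr False"
    "M $ Inr False $ Inr True = N $ Inr False $ Inr True"
    "M $ Inr False $ Inr False = N $ Inr False $ Inr False"
  shows "M = N"
proof -
  have "M $ r $ c = N $ r $ c" for r c
    using assms by (cases r; cases c) (auto, (metis (full_types))+)
  then show ?thesis by (simp add: vec_eq_iff)
qed

lemma matrix_mult_block_nth:
  "((M::real^('n::finite + bool)^('m::finite)) ** N) $ r $ c =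
     (\<Sum>i\<in>UNIV. M $ r $ Inl i * N $ Inl i $ c) + M $ r $ Inr True * N $ Inr True $ c
     + M $ r $ Inr False * N $ Inr False $ c"
  by (simp add: matrix_matrix_mult_def sum_UNIV_sum_bool)

lemma genmat_eq_0_iff: "genmat P a X A Z = 0 \<longleftrightarrow> a = 0 \<and> X = 0 \<and> A = 0 \<and> Z = 0"
proof
  assume "genmat P a X A Z = 0"
  then have "genmat P a X A Z $ r $ c = 0" for r c by simp
  from this[of "Inr True" "Inr True"] this[of "Inl _" "Inr True"] this[of "Inl _" "Inl _"]
    this[of "Inr True" "Inl _"]
  show "a = 0 \<and> X = 0 \<and> A = 0 \<and> Z = 0" by (simp add: vec_eq_iff)
qed (auto intro: block_matrix_eqI)

lemma br_antisym: "br M N = - br N M"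
  by (simp add: br_def)

lemma br_zero_right [simp]: "br M 0 = 0"
  by (simp add: br_def)

lemma br_zero_left [simp]: "br 0 M = 0"
  by (simp add: br_def)

lemma br_scaleR_left: "br (c *\<^sub>R M) N = c *\<^sub>R br M N"
  by (simp add: br_def vec_eq_iff matrix_matrix_mult_def sum_distrib_left algebra_simps)

lemma br_uminus_left: "br (- M) N = - br M N"
  using br_scaleR_left[of "-1" M N] by simp

lemma br_br_right_swap: "br (br M N) N = br N (br N M)"
  using br_antisym[of M N] br_antisym[of "br N M" N] by (simp add: br_uminus_left)

lemma br_br_left_swap: "br (br M N) M = - br (br N M) M"
  using br_antisym[of M N] by (simp add: br_uminus_left)

lemma linear_br: "linear (br M)"
  by (rule linearI)
    (simp_all add: br_def vec_eq_iff matrix_matrix_mult_def sum.distrib sum_distrib_left algebra_simps)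

lemma linear_gm1: "linear (gm1 P)"
  by (rule linearI; rule block_matrix_eqI) (simp_all add: gm1_def algebra_simps)

lemma linear_gp1: "linear (gp1 P)"
  by (rule linearI; rule block_matrix_eqI) (simp_all add: gp1_def algebra_simps)

lemma gm1_inject [simp]: "gm1 P X = gm1 P Y \<longleftrightarrow> X = Y"
  by (metis gm1_def genmat_nth(4) vec_eq_iff)

lemma gp1_inject [simp]: "gp1 P X = gp1 P Y \<longleftrightarrow> X = Y"
  by (metis gp1_def genmat_nth(2) vec_eq_iff)

lemma gm1_eq_0_iff [simp]: "gm1 P X = 0 \<longleftrightarrow> X = 0"
  by (metis gm1_inject linear_0[OF linear_gm1])

lemma subspace_g_minus: "subspace (g_minus P)"
  unfolding g_minus_def by (rule linear_subspace_image[OF linear_gm1 subspace_UNIV])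

section \<open>Brackets of g_{-1} with g_1\<close>

definition wedge_pq :: "'n::finite set \<Rightarrow> real^'n \<Rightarrow> real^'n \<Rightarrow> real^'n^'n" where
  "wedge_pq P X z = (\<chi> i j. X $ i * z $ j - eps P i * z $ i * (eps P j * X $ j))"

lemma br_gm1_gp1: "br (gm1 P X) (gp1 P z) = genmat P (- (z \<bullet> X)) 0 (wedge_pq P X z) 0"
  by (rule block_matrix_eqI)
    (simp_all add: br_def gm1_def gp1_def matrix_mult_block_nth wedge_pq_def inner_vec_def mult.commute)

lemma wedge_pq_mult_vec:
  "wedge_pq P X z *v w = (z \<bullet> w) *\<^sub>R X - form_pq P X w *\<^sub>R (Ibb P *v z)"
proof -
  have "(wedge_pq P X z *v w) $ i = (\<Sum>j\<in>UNIV. (X $ i * z $ j - eps P i * z $ i * (eps P j * X $ j)) * w $ j)"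
    for i by (simp add: matrix_vector_mult_def wedge_pq_def)
  then show ?thesis
    by (simp add: vec_eq_iff inner_vec_def form_pq_eq_sum left_diff_distrib sum_subtractf
        sum_distrib_left algebra_simps)
qed

lemma br_gm1_br_gm1_gp1:
  "br (gm1 P X) (br (gm1 P X) (gp1 P z)) =
     gm1 P ((-2 * (z \<bullet> X)) *\<^sub>R X + form_pq P X X *\<^sub>R (Ibb P *v z))"
  unfolding br_gm1_gp1
  by (rule block_matrix_eqI)
    (simp_all add: br_def gm1_def matrix_mult_block_nth wedge_pq_def inner_vec_def form_pq_eq_sum
      sum_subtractf sum_distrib_left sum_distrib_right algebra_simps,
     simp_all add: sum.distrib[symmetric] sum_negf[symmetric] algebra_simps)

lemma br_br_gm1_gp1_gp1:
  "br (br (gm1 P X) (gp1 P z)) (gp1 P z) =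
     gp1 P (form_pq P z z *\<^sub>R (Ibb P *v X) - (2 * (z \<bullet> X)) *\<^sub>R z)"
  unfolding br_gm1_gp1
  by (rule block_matrix_eqI)
    (simp_all add: br_def gp1_def matrix_mult_block_nth wedge_pq_def inner_vec_def form_pq_eq_sum
      sum_subtractf sum_distrib_left sum_distrib_right algebra_simps,
     simp_all add: sum.distrib[symmetric] sum_negf[symmetric] algebra_simps)

section \<open>The sets C(Z), F(Z) and T(Z)\<close>

lemma CZ_subset_FZ: "CZ P Zm \<subseteq> FZ P Zm"
  by (auto simp: CZ_def FZ_def)

lemma CZ_gp1:
  assumes s: "form_pq P z z \<noteq> 0"
  shows "CZ P (gp1 P z) = {0}"
proof -
  have "X = 0" if "br (gm1 P X) (gp1 P z) = 0" for X
  proof -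
    from that have "z \<bullet> X = 0" "wedge_pq P X z = 0"
      by (simp_all add: br_gm1_gp1 genmat_eq_0_iff)
    then have "form_pq P z z *\<^sub>R X = 0"
      using wedge_pq_mult_vec[of P X z "Ibb P *v z"] by (simp add: form_pq_def inner_commute)
    then show ?thesis using s by simp
  qed
  then show ?thesis
    unfolding CZ_def g_minus_def using linear_0[OF linear_gm1] by auto
qed

lemma F_equation_iff:
  assumes s: "form_pq P z z \<noteq> 0"
  shows "(-2 * (z \<bullet> X)) *\<^sub>R X + form_pq P X X *\<^sub>R (Ibb P *v z) = 0
     \<longleftrightarrow> z \<bullet> X = 0 \<and> form_pq P X X = 0" (is "?Y = 0 \<longleftrightarrow> _")
proof
  assume Y: "?Y = 0"
  define c q where "c = z \<bullet> X" and "q = form_pq P X X"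
  have "z \<bullet> ?Y = 0" "(Ibb P *v X) \<bullet> ?Y = 0"
    using Y by simp_all
  then have e1: "q * form_pq P z z = 2 * c * c" and e2: "c * q = 0"
    by (simp_all add: c_def q_def inner_add_right form_pq_def inner_Ibb_commute inner_commute
        algebra_simps)
  then show "z \<bullet> X = 0 \<and> form_pq P X X = 0"
    using s by (auto simp: c_def[symmetric] q_def[symmetric])
qed simp

lemma FZ_gp1:
  assumes "form_pq P z z \<noteq> 0"
  shows "FZ P (gp1 P z) = {gm1 P X | X. z \<bullet> X = 0 \<and> form_pq P X X = 0}"
  unfolding FZ_def g_minus_def using F_equation_iff[OF assms]
  by (auto simp: br_gm1_br_gm1_gp1)

lemma T_equations_iff:
  assumes s: "form_pq P z z \<noteq> 0"
  shows "(-2 * (z \<bullet> X)) *\<^sub>R X + form_pq P X X *\<^sub>R (Ibb P *v z) = (-2) *\<^sub>R X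
       \<and> (2 * (z \<bullet> X)) *\<^sub>R z - form_pq P z z *\<^sub>R (Ibb P *v X) = 2 *\<^sub>R z
     \<longleftrightarrow> X = (2 / form_pq P z z) *\<^sub>R (Ibb P *v z)" (is "?L \<longleftrightarrow> _")
proof
  assume L: ?L
  obtain c where c: "z \<bullet> X = c" by blast
  have "form_pq P z z *\<^sub>R (Ibb P *v X) = (2 * c - 2) *\<^sub>R z"
    using conjunct2[OF L] c by (simp add: algebra_simps)
  then have "Ibb P *v (form_pq P z z *\<^sub>R (Ibb P *v X)) = Ibb P *v ((2 * c - 2) *\<^sub>R z)"
    by (rule arg_cong)
  then have "inverse (form_pq P z z) *\<^sub>R (form_pq P z z *\<^sub>R X)
      = inverse (form_pq P z z) *\<^sub>R ((2 * c - 2) *\<^sub>R (Ibb P *v z))"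
    by simp
  then have X: "X = ((2 * c - 2) / form_pq P z z) *\<^sub>R (Ibb P *v z)"
    using s by (simp add: divide_inverse mult.commute)
  then have "c = 2 * c - 2"
    using s c by (simp add: form_pq_def)
  then show "X = (2 / form_pq P z z) *\<^sub>R (Ibb P *v z)"
    using X by simp
next
  assume X: "X = (2 / form_pq P z z) *\<^sub>R (Ibb P *v z)"
  have c: "z \<bullet> X = 2"
    using s by (simp add: X form_pq_def)
  have q: "form_pq P X X = 4 / form_pq P z z"
    using s by (simp add: X form_pq_def inner_commute field_simps)
  show ?L
    unfolding c q using s by (simp add: X vec_eq_iff field_simps)
qed

lemma TZ_gp1:
  assumes s: "form_pq P z z \<noteq> 0"
  shows "TZ P (gp1 P z) = {gm1 P ((2 / form_pq P z z) *\<^sub>R (Ibb P *v z))}"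
proof -
  have T: "gm1 P X \<in> TZ P (gp1 P z) \<longleftrightarrow> X = (2 / form_pq P z z) *\<^sub>R (Ibb P *v z)" for X
  proof -
    have "br (br (gp1 P z) (gm1 P X)) (gm1 P X)
        = gm1 P ((-2 * (z \<bullet> X)) *\<^sub>R X + form_pq P X X *\<^sub>R (Ibb P *v z))"
      by (simp add: br_br_right_swap br_gm1_br_gm1_gp1)
    moreover have "br (br (gp1 P z) (gm1 P X)) (gp1 P z)
        = gp1 P ((2 * (z \<bullet> X)) *\<^sub>R z - form_pq P z z *\<^sub>R (Ibb P *v X))"
      by (simp add: br_br_left_swap br_br_gm1_gp1_gp1 linear_neg[OF linear_gp1, symmetric])
    moreover have "(-2) *\<^sub>R gm1 P X = gm1 P ((-2) *\<^sub>R X)" "2 *\<^sub>R gp1 P z = gp1 P (2 *\<^sub>R z)"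
      by (simp_all only: linear_scale[OF linear_gm1] linear_scale[OF linear_gp1])
    ultimately have "gm1 P X \<in> TZ P (gp1 P z) \<longleftrightarrow>
        (-2 * (z \<bullet> X)) *\<^sub>R X + form_pq P X X *\<^sub>R (Ibb P *v z) = (-2) *\<^sub>R X
      \<and> (2 * (z \<bullet> X)) *\<^sub>R z - form_pq P z z *\<^sub>R (Ibb P *v X) = 2 *\<^sub>R z"
      unfolding TZ_def g_minus_def by auto
    then show ?thesis
      using T_equations_iff[OF s, of X] by blast
  qed
  show ?thesis
  proof (intro set_eqI iffI)
    fix x assume x: "x \<in> TZ P (gp1 P z)"
    then obtain X where "x = gm1 P X"
      unfolding TZ_def g_minus_def by blast
    with x T show "x \<in> {gm1 P ((2 / form_pq P z z) *\<^sub>R (Ibb P *v z))}" by simp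
  qed (use T in simp)
qed

section \<open>The grading element\<close>

definition grading_matrix :: "'n::finite set \<Rightarrow> real^('n + bool)^('n + bool)" where
  "grading_matrix P = genmat P 1 0 0 0"

lemma so_pq_0: "so_pq P 0"
  by (simp add: so_pq_def vec_eq_iff transpose_def matrix_matrix_mult_def)

lemma br_grading_matrix_gm1: "br (grading_matrix P) (gm1 P X) = - gm1 P X"
  by (rule block_matrix_eqI) (simp_all add: grading_matrix_def br_def gm1_def matrix_mult_block_nth)

lemma br_grading_matrix_gp1: "br (grading_matrix P) (gp1 P X) = gp1 P X"
  by (rule block_matrix_eqI) (simp_all add: grading_matrix_def br_def gp1_def matrix_mult_block_nth)

lemma br_grading_matrix_g0: "br (grading_matrix P) (genmat P a 0 A 0) = 0"
  by (rule block_matrix_eqI) (simp_all add: grading_matrix_def br_def matrix_mult_block_nth)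

lemma grading_matrix_unique:
  fixes P :: "'n::finite set"
  assumes E: "E \<in> gpq P" and minus: "\<forall>x\<in>g_minus P. br E x = - x"
    and zero: "\<forall>x\<in>g_zero P. br E x = 0"
  shows "E = grading_matrix P"
proof -
  obtain a Y A W where E_def: "E = genmat P a Y A W" and so: "so_pq P A"
    using E by (auto simp: gpq_def)
  have "grading_matrix P \<in> g_zero P"
    using so_pq_0 by (auto simp: g_zero_def grading_matrix_def)
  then have comm: "br E (grading_matrix P) = 0"
    using zero by blast
  have "br E (grading_matrix P) $ Inl i $ Inr True = Y $ i"
    "br E (grading_matrix P) $ Inr True $ Inl i = - W $ i" for i
    by (simp_all add: E_def grading_matrix_def br_def matrix_mult_block_nth)
  then have Y: "Y = 0" and W: "W = 0"
    using comm by (simp_all add: vec_eq_iff)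
  have A: "A $ i $ j = (if i = j then a - 1 else 0)" for i j
  proof -
    have "br E (gm1 P (axis j 1)) $ Inl i $ Inr True = - (gm1 P (axis j 1) $ Inl i $ Inr True)"
      using minus by (simp add: g_minus_def)
    then show ?thesis
      by (simp add: E_def Y W br_def matrix_mult_block_nth gm1_def axis_def if_distrib sum.delta'
          split: if_splits cong: if_cong)
  qed
  have "(transpose A ** Ibb P + Ibb P ** A) $ i $ i = 0" for i
    using so by (simp add: so_pq_def)
  then have "2 * (a - 1) * eps P i = 0" for i
    by (auto simp: transpose_def A)
  from this[of undefined] have "a = 1"
    by (simp add: eps_def split: if_splits)
  with A have "A = 0"
    by (simp add: vec_eq_iff)
  then show ?thesis
    by (simp add: E_def Y W \<open>a = 1\<close> grading_matrix_def)
qed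

lemma grading_element_eq: "grading_element P = grading_matrix P"
  unfolding grading_element_def
proof (rule the_equality)
  show "grading_matrix P \<in> gpq P \<and> (\<forall>x\<in>g_minus P. br (grading_matrix P) x = - x)
      \<and> (\<forall>x\<in>g_zero P. br (grading_matrix P) x = 0) \<and> (\<forall>x\<in>g_plus P. br (grading_matrix P) x = x)"
    using so_pq_0
    by (auto simp: gpq_def g_minus_def g_zero_def g_plus_def br_grading_matrix_gm1
        br_grading_matrix_gp1 br_grading_matrix_g0 grading_matrix_def[symmetric])
      (auto simp: grading_matrix_def)
qed (use grading_matrix_unique in blast)

lemma br_gp1_gm1_Ibb:
  assumes s: "form_pq P z z \<noteq> 0"
  shows "br (gp1 P z) (gm1 P ((2 / form_pq P z z) *\<^sub>R (Ibb P *v z))) = 2 *\<^sub>R grading_matrix P"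
proof -
  have "wedge_pq P ((2 / form_pq P z z) *\<^sub>R (Ibb P *v z)) z = 0"
    by (simp add: wedge_pq_def vec_eq_iff algebra_simps)
  moreover have "z \<bullet> ((2 / form_pq P z z) *\<^sub>R (Ibb P *v z)) = 2"
    using s by (simp add: form_pq_def)
  ultimately have "br (gp1 P z) (gm1 P ((2 / form_pq P z z) *\<^sub>R (Ibb P *v z))) = - genmat P (-2) 0 0 0"
    by (subst br_antisym) (simp add: br_gm1_gp1)
  also have "\<dots> = 2 *\<^sub>R grading_matrix P"
    by (rule block_matrix_eqI) (simp_all add: grading_matrix_def)
  finally show ?thesis .
qed

lemma rho_scaled_grading: "rho P (c *\<^sub>R grading_matrix P) X = (- c) *\<^sub>R X"
  by (simp add: rho_def br_scaleR_left br_grading_matrix_gm1 m1coord_def vec_eq_iff) (simp add: gm1_def)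

lemma weyl_act_scaled_grading: "weyl_act P (c *\<^sub>R grading_matrix P) = (*\<^sub>R) (2 * c)"
  by (simp add: fun_eq_iff weyl_act_def rho_scaled_grading vec_eq_iff axis_def if_distrib
      if_distribR sum.delta cong: if_cong)

lemma cotton_act_scaled_grading: "cotton_act P (c *\<^sub>R grading_matrix P) = (*\<^sub>R) (3 * c)"
  by (simp add: fun_eq_iff cotton_act_def rho_scaled_grading vec_eq_iff axis_def if_distrib
      if_distribR sum.delta cong: if_cong)

section \<open>Scalar actions\<close>

lemma subspace_Collect_linear_eq: "linear f \<Longrightarrow> linear g \<Longrightarrow> subspace {x. f x = g x}"
  unfolding subspace_def by (auto simp: linear_add linear_scale linear_0)

lemma subspace_weyl_space: "subspace (weyl_space P)"
proof -
  have "weyl_space P = (\<Inter>i. \<Inter>j. \<Inter>k. \<Inter>l.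
          {R. R $ i $ j $ k $ l = - R $ j $ i $ k $ l}
        \<inter> {R. eps P l * R $ i $ j $ k $ l = - (eps P k * R $ i $ j $ l $ k)}
        \<inter> {R. R $ i $ j $ k $ l + R $ j $ k $ i $ l + R $ k $ i $ j $ l = 0})
      \<inter> (\<Inter>j. \<Inter>k. {R. (\<Sum>i\<in>UNIV. R $ i $ j $ k $ i) = 0})"
    unfolding weyl_space_def by blast
  also have "subspace \<dots>"
    by (intro subspace_Int subspace_inter subspace_Collect_linear_eq linearI)
      (simp_all add: algebra_simps sum.distrib sum_distrib_left)
  finally show ?thesis .
qed

lemma subspace_cotton_space: "subspace (cotton_space P)"
proof -
  have "cotton_space P = (\<Inter>i. \<Inter>j. \<Inter>k.
          {C. C $ i $ j $ k = - C $ j $ i $ k}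
        \<inter> {C. C $ i $ j $ k + C $ j $ k $ i + C $ k $ i $ j = 0})
      \<inter> (\<Inter>j. {C. (\<Sum>i\<in>UNIV. eps P i * C $ i $ j $ i) = 0})"
    unfolding cotton_space_def by blast
  also have "subspace \<dots>"
    by (intro subspace_Int subspace_inter subspace_Collect_linear_eq linearI)
      (simp_all add: algebra_simps sum.distrib sum_distrib_left)
  finally show ?thesis .
qed

lemma eigsp_scalar_map:
  assumes W: "subspace W" and f: "\<And>w. w \<in> W \<Longrightarrow> f w = k *\<^sub>R w"
  shows "eigsp W f c = (if c = k then W else {0})"
  using subspace_0[OF W] by (auto simp: eigsp_def f scaleR_cancel_right)

lemma diag_on_scalar_map:
  assumes W: "subspace W" and "linear f" and f: "\<And>w. w \<in> W \<Longrightarrow> f w = k *\<^sub>R w"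
  shows "diag_on W f"
proof -
  have "W \<subseteq> (\<Union>c. eigsp W f c)"
    using eigsp_scalar_map[OF W f, of k] by auto
  then have "W \<subseteq> span (\<Union>c. eigsp W f c)"
    using span_superset by (rule order_trans)
  moreover have "f w \<in> W" if "w \<in> W" for w
    using that f subspace_scale[OF W] by simp
  ultimately show ?thesis
    unfolding diag_on_def using W \<open>linear f\<close> by blast
qed

lemma W_st_scalar_map_pos:
  assumes "subspace W" "\<And>w. w \<in> W \<Longrightarrow> f w = k *\<^sub>R w" and "k > 0"
  shows "W_st W f = {0}"
proof -
  have "(\<Union>c\<in>{c. c \<le> 0}. eigsp W f c) = {0}"
    using eigsp_scalar_map[OF assms(1,2)] \<open>k > 0\<close> by force
  then show ?thesis
    by (simp add: W_st_def)
qed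

lemma W_ss_subset_W_st: "W_ss W f \<subseteq> W_st W f"
  unfolding W_ss_def W_st_def by (intro span_mono UN_mono) auto

lemma harm_concl_scalar_action:
  assumes W: "subspace W" and T: "TZ P Zm = {X}" and A: "br Zm X = A"
    and act: "act A = (*\<^sub>R) k" and "k > 0"
  shows "harm_concl P act W Zm A"
proof -
  have st: "W_st W ((*\<^sub>R) k) = {0}"
    by (rule W_st_scalar_map_pos[OF W _ \<open>k > 0\<close>]) simp
  moreover have "0 \<in> W_ss W ((*\<^sub>R) k)"
    unfolding W_ss_def by (rule span_zero)
  then have "W_ss W ((*\<^sub>R) k) = {0}"
    using W_ss_subset_W_st[of W "(*\<^sub>R) k"] st by blast
  moreover have "diag_on W ((*\<^sub>R) k)"
    by (rule diag_on_scalar_map[OF W linear_scale_self, where k = k]) simp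
  ultimately show ?thesis
    unfolding harm_concl_def T by (simp add: A act)
qed

lemma br_gp1_TZ:
  assumes "form_pq P z z \<noteq> 0" and "X \<in> TZ P (gp1 P z)"
  shows "br (gp1 P z) X = 2 *\<^sub>R grading_element P"
  using assms by (simp add: TZ_gp1 br_gp1_gm1_Ibb grading_element_eq)

lemma br_twice_grading_element_g_minus:
  "w \<in> g_minus P \<Longrightarrow> br (2 *\<^sub>R grading_element P) w = (-2) *\<^sub>R w"
  by (auto simp: g_minus_def grading_element_eq br_scaleR_left br_grading_matrix_gm1)

lemma diag_on_g_minus_twice_grading_element: "diag_on (g_minus P) (br (2 *\<^sub>R grading_element P))"
  by (rule diag_on_scalar_map[OF subspace_g_minus linear_br br_twice_grading_element_g_minus])

lemma eigsp_g_minus_twice_grading_element: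
  "eigsp (g_minus P) (br (2 *\<^sub>R grading_element P)) c = (if c = -2 then g_minus P else {0})"
  by (rule eigsp_scalar_map[OF subspace_g_minus br_twice_grading_element_g_minus])

lemma harm_concl_weyl_gp1:
  assumes "form_pq P z z \<noteq> 0" and "subspace W"
  shows "harm_concl P (weyl_act P) W (gp1 P z) (2 *\<^sub>R grading_element P)"
  using assms TZ_gp1[OF assms(1)] br_gp1_gm1_Ibb[OF assms(1)]
  by (intro harm_concl_scalar_action[where k = 4]) (auto simp: grading_element_eq weyl_act_scaled_grading)

lemma harm_concl_cotton_gp1:
  assumes "form_pq P z z \<noteq> 0"
  shows "harm_concl P (cotton_act P) (cotton_space P) (gp1 P z) (2 *\<^sub>R grading_element P)"
  using subspace_cotton_space TZ_gp1[OF assms] br_gp1_gm1_Ibb[OF assms]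
  by (intro harm_concl_scalar_action[where k = 6]) (auto simp: grading_element_eq cotton_act_scaled_grading)

theorem lemma3p4:
  fixes P :: "'n::finite set" and z :: "real^'n"
  assumes n3: "CARD('n) \<ge> 3"
    and nonnull: "form_pq P z z \<noteq> 0"
  shows "CZ P (gp1 P z) = {0}
    \<and> CZ P (gp1 P z) \<subseteq> FZ P (gp1 P z)
    \<and> FZ P (gp1 P z) = {gm1 P X | X. z \<bullet> X = 0 \<and> form_pq P X X = 0}
    \<and> TZ P (gp1 P z) = {gm1 P ((2 / form_pq P z z) *\<^sub>R (Ibb P *v z))}
    \<and> (\<forall>X\<in>TZ P (gp1 P z).
         let A = br (gp1 P z) X in
           A = 2 *\<^sub>R grading_element P
         \<and> diag_on (g_minus P) (br A)
         \<and> (\<forall>c. (\<exists>w\<in>g_minus P. w \<noteq> 0 \<and> br A w = c *\<^sub>R w) \<longrightarrow> c \<le> 0)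
         \<and> eigsp (g_minus P) (br A) 0 = CZ P (gp1 P z)
         \<and> (CARD('n) \<ge> 5 \<longrightarrow> harm_concl P (weyl_act P) (weyl_space P) (gp1 P z) A)
         \<and> (CARD('n) = 4 \<longrightarrow> (\<forall>W. subspace W \<and> W \<subseteq> weyl_space P
               \<and> g0_invariant P (weyl_act P) W
               \<longrightarrow> harm_concl P (weyl_act P) W (gp1 P z) A))
         \<and> (CARD('n) = 3 \<longrightarrow> harm_concl P (cotton_act P) (cotton_space P) (gp1 P z) A))"
proof -
  have nonpos: "c \<le> 0"
    if "w \<in> g_minus P" "w \<noteq> 0" "br (2 *\<^sub>R grading_element P) w = c *\<^sub>R w" for c w
    using that eigsp_g_minus_twice_grading_element[of P c] by (auto simp: eigsp_def split: if_splits)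
  show ?thesis
    using nonpos CZ_subset_FZ[of P "gp1 P z"] br_gp1_TZ[OF nonnull]
      eigsp_g_minus_twice_grading_element[of P 0]
    by (auto simp: Let_def CZ_gp1 FZ_gp1 TZ_gp1 nonnull diag_on_g_minus_twice_grading_element
        harm_concl_weyl_gp1 subspace_weyl_space harm_concl_cotton_gp1)
qed

end
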